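(* Consider the Disjoint Domination Game in which Dom is allowed to pass (in any turn except the very first move of the game) but Sepy is not allowed to pass. Then: (1) for every finite simple graph $G$ without isolated vertices, Dom has a winning strategy in the Sepy-start game on $G$; (2) for every finite simple graph $G$ without isolated vertices that has at least one Dom-win component, Dom has a winning strategy in the Dom-start game on $G$.
   Context: For a vertex $v$, $N[v]$ denotes its closed neighborhood. The Disjoint Domination Game on an isolate-free graph $G$ is played by Dom and Sepy with colors $p$ and $b$; $V_p,V_b$ denote the current sets of vertices of each color. Players alternate; either player may use either color. A move chooses a vertex $v$ and a color $c$ such that (i) $v$ is uncolored and (ii) some $u\in N[v]$ satisfies $N[u]\cap V_c=\emptyset$ (before the move); then $v$ gets color $c$. A player must make a legal move on his turn whenever one is available, unless he is the player allowed to pass (passing is never allowed on the first move of the game). The game ends as soon as either (s* ) some vertex $v$ has $N[v]\subseteq V_p$ or $N[v]\subseteq V_b$ — Sepy wins; or (d* ) both $V_p$ and $V_b$ are dominating sets of $G$ — Dom wins. In the Dom-start (Sepy-start) game Dom (Sepy) moves first. A Dom-win component of $G$ is a connected component $H$ of $G$ such that Dom has a winning strategy in the Dom-start Disjoint Domination Game (without passing) played on $H$ alone. *)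

theory Defs
  imports Main
begin

definition simple_graph :: "'a set \<Rightarrow> ('a \<Rightarrow> 'a \<Rightarrow> bool) \<Rightarrow> bool" where
  "simple_graph V E \<longleftrightarrow> finite V \<and> (\<forall>u v. E u v \<longrightarrow> u \<in> V \<and> v \<in> V)
     \<and> (\<forall>u v. E u v \<longrightarrow> E v u) \<and> (\<forall>v. \<not> E v v)"

definition isolate_free :: "'a set \<Rightarrow> ('a \<Rightarrow> 'a \<Rightarrow> bool) \<Rightarrow> bool" where
  "isolate_free V E \<longleftrightarrow> (\<forall>v\<in>V. \<exists>u. E v u)"

definition cnbhd :: "('a \<Rightarrow> 'a \<Rightarrow> bool) \<Rightarrow> 'a \<Rightarrow> 'a set" where
  "cnbhd E v = {u. u = v \<or> E v u}"

datatype color = Pcol | Bcol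

definition colset :: "color \<Rightarrow> 'a set \<Rightarrow> 'a set \<Rightarrow> 'a set" where
  "colset c P B = (case c of Pcol \<Rightarrow> P | Bcol \<Rightarrow> B)"

definition legal_move :: "'a set \<Rightarrow> ('a \<Rightarrow> 'a \<Rightarrow> bool) \<Rightarrow> 'a set \<Rightarrow> 'a set \<Rightarrow> 'a \<Rightarrow> color \<Rightarrow> bool" where
  "legal_move V E P B v c \<longleftrightarrow> v \<in> V \<and> v \<notin> P \<and> v \<notin> B
     \<and> (\<exists>u\<in>cnbhd E v. cnbhd E u \<inter> colset c P B = {})"

definition do_move :: "'a set \<Rightarrow> 'a set \<Rightarrow> 'a \<Rightarrow> color \<Rightarrow> 'a set \<times> 'a set" where
  "do_move P B v c = (case c of Pcol \<Rightarrow> (insert v P, B) | Bcol \<Rightarrow> (P, insert v B))"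

definition sepy_end :: "'a set \<Rightarrow> ('a \<Rightarrow> 'a \<Rightarrow> bool) \<Rightarrow> 'a set \<Rightarrow> 'a set \<Rightarrow> bool" where
  "sepy_end V E P B \<longleftrightarrow> (\<exists>v\<in>V. cnbhd E v \<subseteq> P \<or> cnbhd E v \<subseteq> B)"

definition dom_end :: "'a set \<Rightarrow> ('a \<Rightarrow> 'a \<Rightarrow> bool) \<Rightarrow> 'a set \<Rightarrow> 'a set \<Rightarrow> bool" where
  "dom_end V E P B \<longleftrightarrow> (\<forall>v\<in>V. cnbhd E v \<inter> P \<noteq> {} \<and> cnbhd E v \<inter> B \<noteq> {})"

text \<open>Arguments: dom_turn (Dom to move?), first (is this the first move of the game?), P, B.
  Since every play is finite (each Sepy move colours a vertex and Dom cannot pass twice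
  in a row without a Sepy move in between), the inductive (least fixed point) notion
  coincides with the existence of a winning strategy.\<close>
inductive dom_wins :: "'a set \<Rightarrow> ('a \<Rightarrow> 'a \<Rightarrow> bool) \<Rightarrow> bool \<Rightarrow> bool \<Rightarrow> bool \<Rightarrow> 'a set \<Rightarrow> 'a set \<Rightarrow> bool"
  for V E dom_pass where
  ended: "\<not> sepy_end V E P B \<Longrightarrow> dom_end V E P B \<Longrightarrow> dom_wins V E dom_pass t f P B"
| dom_move: "\<not> sepy_end V E P B \<Longrightarrow> \<not> dom_end V E P B \<Longrightarrow> legal_move V E P B v c \<Longrightarrow>
     dom_wins V E dom_pass False False (fst (do_move P B v c)) (snd (do_move P B v c)) \<Longrightarrow>
     dom_wins V E dom_pass True f P B"
| dom_passes: "\<not> sepy_end V E P B \<Longrightarrow> \<not> dom_end V E P B \<Longrightarrow> dom_pass \<Longrightarrow> \<not> f \<Longrightarrow>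
     dom_wins V E dom_pass False False P B \<Longrightarrow>
     dom_wins V E dom_pass True f P B"
| sepy_move: "\<not> sepy_end V E P B \<Longrightarrow> \<not> dom_end V E P B \<Longrightarrow>
     (\<forall>v c. legal_move V E P B v c \<longrightarrow>
        dom_wins V E dom_pass True False (fst (do_move P B v c)) (snd (do_move P B v c))) \<Longrightarrow>
     dom_wins V E dom_pass False f P B"

definition dom_start_win :: "'a set \<Rightarrow> ('a \<Rightarrow> 'a \<Rightarrow> bool) \<Rightarrow> bool \<Rightarrow> bool" where
  "dom_start_win V E dom_pass = dom_wins V E dom_pass True True {} {}"

definition sepy_start_win :: "'a set \<Rightarrow> ('a \<Rightarrow> 'a \<Rightarrow> bool) \<Rightarrow> bool \<Rightarrow> bool" where
  "sepy_start_win V E dom_pass = dom_wins V E dom_pass False True {} {}"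

definition component :: "'a set \<Rightarrow> ('a \<Rightarrow> 'a \<Rightarrow> bool) \<Rightarrow> 'a set \<Rightarrow> bool" where
  "component V E C \<longleftrightarrow> C \<subseteq> V \<and> C \<noteq> {} \<and> (\<forall>x\<in>C. \<forall>y. E x y \<longrightarrow> y \<in> C)
     \<and> (\<forall>x\<in>C. \<forall>y\<in>C. E\<^sup>*\<^sup>* x y)"

definition restrict_edges :: "('a \<Rightarrow> 'a \<Rightarrow> bool) \<Rightarrow> 'a set \<Rightarrow> 'a \<Rightarrow> 'a \<Rightarrow> bool" where
  "restrict_edges E C = (\<lambda>x y. x \<in> C \<and> y \<in> C \<and> E x y)"

definition dom_win_component :: "'a set \<Rightarrow> ('a \<Rightarrow> 'a \<Rightarrow> bool) \<Rightarrow> 'a set \<Rightarrow> bool" where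
  "dom_win_component V E C \<longleftrightarrow> component V E C \<and> dom_start_win C (restrict_edges E C) False"

end

theory Submission
  imports Defs
begin

text \<open>Dom fixes a set C closed under edges on which he can win without passing: C is empty in
  the Sepy-start game, and in the Dom-start game it is a Dom-win component, on which Dom opens.
  He answers Sepy's moves inside C by his strategy on C, passing once that game is over. When
  Sepy gives colour c to a vertex v outside C, Dom passes if N[v] already contains the other
  colour, and otherwise gives that colour to an uncoloured neighbour of v, which exists because
  the legality of Sepy's move keeps N[v] from being monochromatic. Hence every coloured vertex
  outside C sees both colours, so Sepy never completes a monochromatic closed neighbourhood;
  since Dom passes only in reply to a Sepy move, the game ends with both classes dominating.\<close>

definition opp_color :: "color \<Rightarrow> color" where
  "opp_color c = (case c of Pcol \<Rightarrow> Bcol | Bcol \<Rightarrow> Pcol)"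

lemma color_eq_or_opp: "d = c \<or> d = opp_color c"
  by (cases c; cases d) (simp_all add: opp_color_def)

lemma colset_subset_Un: "colset c P B \<subseteq> P \<union> B"
  by (cases c) (auto simp: colset_def)

lemma colset_Un_opp: "colset c P B \<union> colset (opp_color c) P B = P \<union> B"
  by (cases c) (auto simp: colset_def opp_color_def)

lemma colset_Int_opp: "P \<inter> B = {} \<Longrightarrow> colset c P B \<inter> colset (opp_color c) P B = {}"
  by (cases c) (auto simp: colset_def opp_color_def)

lemma colset_Int: "colset c (P \<inter> C) (B \<inter> C) = colset c P B \<inter> C"
  by (cases c) (simp_all add: colset_def)

lemma ex_colset: "(\<exists>c. Q (colset c P B)) \<longleftrightarrow> Q P \<or> Q B"
  by (metis color.exhaust colset_def color.simps(3,4))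

lemma colset_do_move:
  "colset d (fst (do_move P B v c)) (snd (do_move P B v c))
     = (if d = c then insert v (colset d P B) else colset d P B)"
  by (cases c; cases d) (simp_all add: colset_def do_move_def)

lemma do_move_Un: "fst (do_move P B v c) \<union> snd (do_move P B v c) = insert v (P \<union> B)"
  by (cases c) (auto simp: do_move_def)

lemma do_move_mono: "P \<subseteq> fst (do_move P B v c) \<and> B \<subseteq> snd (do_move P B v c)"
  by (cases c) (auto simp: do_move_def)

lemma do_move_disjoint:
  "legal_move V E P B v c \<Longrightarrow> P \<inter> B = {} \<Longrightarrow> fst (do_move P B v c) \<inter> snd (do_move P B v c) = {}"
  by (cases c) (auto simp: do_move_def legal_move_def)

lemma do_move_Int_inside:
  "v \<in> C \<Longrightarrow> do_move (P \<inter> C) (B \<inter> C) v c = (fst (do_move P B v c) \<inter> C, snd (do_move P B v c) \<inter> C)"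
  by (cases c) (auto simp: do_move_def)

lemma mem_cnbhd: "u \<in> cnbhd E v \<longleftrightarrow> u = v \<or> E v u"
  by (simp add: cnbhd_def)

lemma self_in_cnbhd: "v \<in> cnbhd E v"
  by (simp add: cnbhd_def)

definition sees_both_colors :: "('a \<Rightarrow> 'a \<Rightarrow> bool) \<Rightarrow> 'a set \<Rightarrow> 'a set \<Rightarrow> 'a \<Rightarrow> bool" where
  "sees_both_colors E P B w \<longleftrightarrow> cnbhd E w \<inter> P \<noteq> {} \<and> cnbhd E w \<inter> B \<noteq> {}"

lemma sees_both_colors_iff: "sees_both_colors E P B w \<longleftrightarrow> (\<forall>c. cnbhd E w \<inter> colset c P B \<noteq> {})"
  using ex_colset[of "\<lambda>X. cnbhd E w \<inter> X = {}" P B] by (auto simp: sees_both_colors_def)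

lemma sees_both_colorsI:
  assumes "u \<in> cnbhd E w" "u \<in> colset c P B" "u' \<in> cnbhd E w" "u' \<in> colset (opp_color c) P B"
  shows "sees_both_colors E P B w"
proof -
  have "cnbhd E w \<inter> colset d P B \<noteq> {}" for d
    using color_eq_or_opp[of d c] assms by blast
  then show ?thesis unfolding sees_both_colors_iff by blast
qed

lemma sees_both_colors_mono:
  "sees_both_colors E P B w \<Longrightarrow> P \<subseteq> P' \<Longrightarrow> B \<subseteq> B' \<Longrightarrow> sees_both_colors E P' B' w"
  by (auto simp: sees_both_colors_def)

lemma sees_both_colors_not_monochrome:
  assumes "P \<inter> B = {}" and "sees_both_colors E P B w"
  shows "\<not> cnbhd E w \<subseteq> colset c P B"
  using assms colset_Int_opp[of P B c] unfolding sees_both_colors_iff by blast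

lemma dom_end_iff: "dom_end V E P B \<longleftrightarrow> (\<forall>w\<in>V. sees_both_colors E P B w)"
  by (simp add: dom_end_def sees_both_colors_def)

lemma sepy_end_iff: "sepy_end V E P B \<longleftrightarrow> (\<exists>w\<in>V. \<exists>c. cnbhd E w \<subseteq> colset c P B)"
  by (simp add: sepy_end_def ex_colset)

definition closed_under_edges :: "('a \<Rightarrow> 'a \<Rightarrow> bool) \<Rightarrow> 'a set \<Rightarrow> bool" where
  "closed_under_edges E C \<longleftrightarrow> (\<forall>x\<in>C. \<forall>y. E x y \<longrightarrow> y \<in> C)"

lemma cnbhd_subset_if_closed: "closed_under_edges E C \<Longrightarrow> w \<in> C \<Longrightarrow> cnbhd E w \<subseteq> C"
  by (auto simp: closed_under_edges_def mem_cnbhd)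

lemma cnbhd_restrict_edges:
  "closed_under_edges E C \<Longrightarrow> w \<in> C \<Longrightarrow> cnbhd (restrict_edges E C) w = cnbhd E w"
  by (auto simp: closed_under_edges_def cnbhd_def restrict_edges_def)

lemma not_in_closed_if_adjacent:
  "simple_graph V E \<Longrightarrow> closed_under_edges E C \<Longrightarrow> w \<notin> C \<Longrightarrow> E w u \<Longrightarrow> u \<notin> C"
  by (auto simp: closed_under_edges_def simple_graph_def)

lemma sepy_end_restrict_edges:
  assumes "closed_under_edges E C"
  shows "sepy_end C (restrict_edges E C) (P \<inter> C) (B \<inter> C) \<longleftrightarrow> (\<exists>w\<in>C. \<exists>c. cnbhd E w \<subseteq> colset c P B)"
  using cnbhd_subset_if_closed[OF assms] cnbhd_restrict_edges[OF assms]
  by (auto simp: sepy_end_iff colset_Int)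

lemma legal_move_restrict_edges:
  assumes cl: "closed_under_edges E C" and "C \<subseteq> V" and v: "v \<in> C"
  shows "legal_move C (restrict_edges E C) (P \<inter> C) (B \<inter> C) v c \<longleftrightarrow> legal_move V E P B v c"
proof -
  have "cnbhd (restrict_edges E C) u \<inter> colset c (P \<inter> C) (B \<inter> C) = cnbhd E u \<inter> colset c P B"
    if "u \<in> cnbhd E v" for u
  proof -
    have "u \<in> C" using that cnbhd_subset_if_closed[OF cl v] by blast
    then show ?thesis
      using cnbhd_restrict_edges[OF cl] cnbhd_subset_if_closed[OF cl] by (auto simp: colset_Int)
  qed
  then show ?thesis
    using assms cnbhd_restrict_edges[OF cl v] by (auto simp: legal_move_def)
qed

lemma legal_move_not_dom_end:
  assumes "\<And>x y. E x y \<Longrightarrow> y \<in> V" and lg: "legal_move V E P B v c"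
  shows "\<not> dom_end V E P B"
proof -
  obtain u where u: "u \<in> cnbhd E v" and free: "cnbhd E u \<inter> colset c P B = {}"
    using lg unfolding legal_move_def by blast
  have "u \<in> V" using u assms(1) lg unfolding mem_cnbhd legal_move_def by blast
  moreover have "\<not> sees_both_colors E P B u" using free unfolding sees_both_colors_iff by blast
  ultimately show ?thesis unfolding dom_end_iff by blast
qed

lemma legal_move_not_monochrome:
  assumes sg: "simple_graph V E" and iso: "isolate_free V E" and lg: "legal_move V E P B v c"
  shows "\<not> cnbhd E v \<subseteq> colset c (fst (do_move P B v c)) (snd (do_move P B v c))"
proof
  assume "cnbhd E v \<subseteq> colset c (fst (do_move P B v c)) (snd (do_move P B v c))"
  then have mono: "cnbhd E v \<subseteq> insert v (colset c P B)"
    by (simp add: colset_do_move)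
  obtain u where u: "u \<in> cnbhd E v" and free: "cnbhd E u \<inter> colset c P B = {}"
    using lg unfolding legal_move_def by blast
  have "u \<notin> colset c P B" using free self_in_cnbhd[of u E] by blast
  with u mono have "u = v" by blast
  obtain y where "E v y" using iso lg unfolding isolate_free_def legal_move_def by blast
  then have y: "y \<in> cnbhd E v" "y \<noteq> v" using sg by (auto simp: mem_cnbhd simple_graph_def)
  with mono have "y \<in> colset c P B" by blast
  with y free \<open>u = v\<close> show False by blast
qed

lemma dom_wins_not_sepy_end: "dom_wins V E dp t f P B \<Longrightarrow> \<not> sepy_end V E P B"
  by (induction rule: dom_wins.induct) auto

lemma dom_wins_after_sepy_move:
  "dom_wins V E dp False f P B \<Longrightarrow> legal_move V E P B v c \<Longrightarrow> \<not> dom_end V E P B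
     \<Longrightarrow> dom_wins V E dp True False (fst (do_move P B v c)) (snd (do_move P B v c))"
  by (erule dom_wins.cases) auto

lemma dom_wins_without_passE:
  assumes "dom_wins V E False True f P B"
  obtains "dom_end V E P B"
  | w d where "legal_move V E P B w d"
      and "dom_wins V E False False False (fst (do_move P B w d)) (snd (do_move P B w d))"
  using assms by (cases rule: dom_wins.cases) auto

definition outside_balanced :: "('a \<Rightarrow> 'a \<Rightarrow> bool) \<Rightarrow> 'a set \<Rightarrow> 'a set \<Rightarrow> 'a set \<Rightarrow> bool" where
  "outside_balanced E C P B \<longleftrightarrow> (\<forall>w \<in> (P \<union> B) - C. sees_both_colors E P B w)"

lemma outside_balanced_extend:
  assumes "outside_balanced E C P B" and "P \<subseteq> P'" and "B \<subseteq> B'"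
    and "\<And>w. w \<in> (P' \<union> B') - (P \<union> B) - C \<Longrightarrow> sees_both_colors E P' B' w"
  shows "outside_balanced E C P' B'"
  unfolding outside_balanced_def
proof
  fix w assume w: "w \<in> (P' \<union> B') - C"
  show "sees_both_colors E P' B' w"
  proof (cases "w \<in> P \<union> B")
    case True
    with w assms(1) have "sees_both_colors E P B w" unfolding outside_balanced_def by blast
    then show ?thesis using assms(2,3) by (rule sees_both_colors_mono)
  next
    case False
    with w assms(4) show ?thesis by blast
  qed
qed

lemma outside_balanced_move_inside:
  assumes "outside_balanced E C P B" and "v \<in> C"
  shows "outside_balanced E C (fst (do_move P B v c)) (snd (do_move P B v c))"
proof (rule outside_balanced_extend[OF assms(1)])
  show "P \<subseteq> fst (do_move P B v c)" "B \<subseteq> snd (do_move P B v c)"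
    using do_move_mono[of P B v c] by simp_all
next
  fix w assume "w \<in> fst (do_move P B v c) \<union> snd (do_move P B v c) - (P \<union> B) - C"
  with assms(2) show "sees_both_colors E (fst (do_move P B v c)) (snd (do_move P B v c)) w"
    by (auto simp: do_move_Un)
qed

lemma not_sepy_end_if_outside_balanced:
  assumes cl: "closed_under_edges E C" and dj: "P \<inter> B = {}" and bal: "outside_balanced E C P B"
    and nse: "\<not> sepy_end C (restrict_edges E C) (P \<inter> C) (B \<inter> C)"
  shows "\<not> sepy_end V E P B"
proof
  assume "sepy_end V E P B"
  then obtain w c where mono: "cnbhd E w \<subseteq> colset c P B" unfolding sepy_end_iff by blast
  show False
  proof (cases "w \<in> C")
    case True
    with mono nse show False unfolding sepy_end_restrict_edges[OF cl] by blast
  next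
    case False
    have "w \<in> P \<union> B" using mono self_in_cnbhd[of w E] colset_subset_Un[of c P B] by blast
    with False bal have "sees_both_colors E P B w" unfolding outside_balanced_def by blast
    with mono show False using sees_both_colors_not_monochrome[OF dj] by blast
  qed
qed

text \<open>Holds at Sepy's turn in every position reached by Dom's strategy.\<close>

definition strategy_invariant :: "('a \<Rightarrow> 'a \<Rightarrow> bool) \<Rightarrow> 'a set \<Rightarrow> 'a set \<Rightarrow> 'a set \<Rightarrow> bool" where
  "strategy_invariant E C P B \<longleftrightarrow> P \<inter> B = {} \<and> outside_balanced E C P B
     \<and> dom_wins C (restrict_edges E C) False False False (P \<inter> C) (B \<inter> C)"

definition dom_can_restore :: "'a set \<Rightarrow> ('a \<Rightarrow> 'a \<Rightarrow> bool) \<Rightarrow> 'a set \<Rightarrow> 'a set \<Rightarrow> 'a set \<Rightarrow> bool" where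
  "dom_can_restore V E C P B \<longleftrightarrow> \<not> sepy_end V E P B \<and>
     (dom_end V E P B \<or> strategy_invariant E C P B \<or>
      (\<exists>w d. legal_move V E P B w d \<and>
         strategy_invariant E C (fst (do_move P B w d)) (snd (do_move P B w d))))"

lemma dom_can_restore_after_move_inside:
  assumes cl: "closed_under_edges E C" and CV: "C \<subseteq> V"
    and inv: "strategy_invariant E C P B" and lg: "legal_move V E P B v c" and vC: "v \<in> C"
    and mv: "do_move P B v c = (P', B')"
  shows "dom_can_restore V E C P' B'"
proof -
  from inv have dj: "P \<inter> B = {}" and bal: "outside_balanced E C P B"
    and winC: "dom_wins C (restrict_edges E C) False False False (P \<inter> C) (B \<inter> C)"
    unfolding strategy_invariant_def by blast+
  have lgC: "legal_move C (restrict_edges E C) (P \<inter> C) (B \<inter> C) v c"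
    using legal_move_restrict_edges[OF cl CV vC] lg by blast
  have "\<not> dom_end C (restrict_edges E C) (P \<inter> C) (B \<inter> C)"
    by (rule legal_move_not_dom_end[OF _ lgC]) (simp add: restrict_edges_def)
  with winC lgC have winC': "dom_wins C (restrict_edges E C) False True False (P' \<inter> C) (B' \<inter> C)"
    using dom_wins_after_sepy_move do_move_Int_inside[OF vC, of P B c] mv by fastforce
  have dj': "P' \<inter> B' = {}" using do_move_disjoint[OF lg dj] mv by simp
  have mono': "P \<subseteq> P'" "B \<subseteq> B'" using do_move_mono[of P B v c] by (simp_all add: mv)
  have bal': "outside_balanced E C P' B'"
    using outside_balanced_move_inside[OF bal vC, of c] mv by simp
  have nse': "\<not> sepy_end V E P' B'"
    using not_sepy_end_if_outside_balanced[OF cl dj' bal'] dom_wins_not_sepy_end[OF winC'] .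
  from winC' show ?thesis
  proof (cases rule: dom_wins_without_passE)
    case 1
    then have "dom_wins C (restrict_edges E C) False False False (P' \<inter> C) (B' \<inter> C)"
      using dom_wins_not_sepy_end[OF winC'] by (blast intro: dom_wins.ended)
    then show ?thesis using nse' dj' bal' by (simp add: dom_can_restore_def strategy_invariant_def)
  next
    case (2 w d)
    have wC: "w \<in> C" using 2(1) by (simp add: legal_move_def)
    have lgw: "legal_move V E P' B' w d" using legal_move_restrict_edges[OF cl CV wC] 2(1) by blast
    obtain P'' B'' where mv': "do_move P' B' w d = (P'', B'')" by fastforce
    have "dom_wins C (restrict_edges E C) False False False (P'' \<inter> C) (B'' \<inter> C)"
      using 2(2) do_move_Int_inside[OF wC, of P' B' d] mv' by simp
    moreover have "P'' \<inter> B'' = {}" using do_move_disjoint[OF lgw dj'] mv' by simp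
    moreover have "outside_balanced E C P'' B''"
      using outside_balanced_move_inside[OF bal' wC, of d] mv' by simp
    ultimately have "strategy_invariant E C P'' B''" by (simp add: strategy_invariant_def)
    then show ?thesis using nse' lgw mv' unfolding dom_can_restore_def by (metis fst_conv snd_conv)
  qed
qed

lemma not_sepy_end_after_move_outside:
  assumes sg: "simple_graph V E" and iso: "isolate_free V E" and cl: "closed_under_edges E C"
    and inv: "strategy_invariant E C P B" and lg: "legal_move V E P B v c" and vC: "v \<notin> C"
  shows "\<not> sepy_end V E (fst (do_move P B v c)) (snd (do_move P B v c))"
proof
  let ?P' = "fst (do_move P B v c)" and ?B' = "snd (do_move P B v c)"
  from inv have dj: "P \<inter> B = {}" and bal: "outside_balanced E C P B"
    and winC: "dom_wins C (restrict_edges E C) False False False (P \<inter> C) (B \<inter> C)"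
    unfolding strategy_invariant_def by blast+
  assume "sepy_end V E ?P' ?B'"
  then obtain w d where mono: "cnbhd E w \<subseteq> colset d ?P' ?B'" unfolding sepy_end_iff by blast
  consider "w \<in> C" | "w = v" | "w \<notin> C" "w \<noteq> v" using vC by blast
  then show False
  proof cases
    case 1
    then have "v \<notin> cnbhd E w" using cnbhd_subset_if_closed[OF cl] vC by blast
    with mono have "cnbhd E w \<subseteq> colset d P B" by (auto simp: colset_do_move split: if_splits)
    with 1 have "sepy_end C (restrict_edges E C) (P \<inter> C) (B \<inter> C)"
      unfolding sepy_end_restrict_edges[OF cl] by blast
    with dom_wins_not_sepy_end[OF winC] show False by blast
  next
    case 2
    show False
    proof (cases "d = c")
      case True
      with 2 mono legal_move_not_monochrome[OF sg iso lg] show False by simp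
    next
      case False
      with 2 mono self_in_cnbhd[of v E] have "v \<in> colset d P B" by (auto simp: colset_do_move)
      with lg colset_subset_Un[of d P B] show False by (auto simp: legal_move_def)
    qed
  next
    case 3
    have "w \<in> insert v (P \<union> B)"
      using mono self_in_cnbhd[of w E] colset_subset_Un[of d ?P' ?B'] do_move_Un[of P B v c] by blast
    with 3 have "w \<in> (P \<union> B) - C" by blast
    with bal have "sees_both_colors E P B w" unfolding outside_balanced_def by blast
    moreover have "P \<subseteq> ?P'" "B \<subseteq> ?B'" using do_move_mono[of P B v c] by simp_all
    ultimately have "sees_both_colors E ?P' ?B' w" by (rule sees_both_colors_mono)
    with mono show False using sees_both_colors_not_monochrome[OF do_move_disjoint[OF lg dj]] by blast
  qed
qed

lemma legal_answer_outside:
  assumes sg: "simple_graph V E" and cl: "closed_under_edges E C" and nse: "\<not> sepy_end V E P B"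
    and v: "v \<in> V" "v \<in> P \<union> B" and vC: "v \<notin> C"
    and miss: "cnbhd E v \<inter> colset (opp_color c) P B = {}"
  obtains z where "E v z" and "z \<notin> C" and "legal_move V E P B z (opp_color c)"
proof -
  have "\<not> cnbhd E v \<subseteq> P \<union> B"
  proof
    assume "cnbhd E v \<subseteq> P \<union> B"
    with miss have "cnbhd E v \<subseteq> colset c P B" using colset_Un_opp[of c P B] by blast
    with v(1) nse show False unfolding sepy_end_iff by blast
  qed
  then obtain z where z: "z \<in> cnbhd E v" "z \<notin> P" "z \<notin> B" by blast
  with v(2) have "z \<noteq> v" by blast
  with z have "E v z" by (simp add: mem_cnbhd)
  then have "z \<in> V" "v \<in> cnbhd E z" "z \<notin> C"
    using sg not_in_closed_if_adjacent[OF sg cl vC] by (auto simp: simple_graph_def mem_cnbhd)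
  with z(2,3) miss have "legal_move V E P B z (opp_color c)" unfolding legal_move_def by blast
  with \<open>E v z\<close> \<open>z \<notin> C\<close> show ?thesis by (rule that)
qed

lemma strategy_invariant_extend_outside:
  assumes inv: "strategy_invariant E C P B" and mono: "P \<subseteq> P'" "B \<subseteq> B'" and dj: "P' \<inter> B' = {}"
    and new: "\<And>w. w \<in> (P' \<union> B') - (P \<union> B) \<Longrightarrow> w \<notin> C \<and> sees_both_colors E P' B' w"
  shows "strategy_invariant E C P' B'"
proof -
  have "w \<in> P \<union> B" if "w \<in> P' \<union> B'" "w \<in> C" for w
    using that new by blast
  with mono dj have "P' \<inter> C = P \<inter> C" "B' \<inter> C = B \<inter> C" by blast+
  moreover have "outside_balanced E C P' B'"
  proof (rule outside_balanced_extend[OF _ mono])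
    show "outside_balanced E C P B" using inv by (simp add: strategy_invariant_def)
    show "sees_both_colors E P' B' w" if "w \<in> (P' \<union> B') - (P \<union> B) - C" for w
      using that new by blast
  qed
  ultimately show ?thesis using inv dj by (simp add: strategy_invariant_def)
qed

lemma dom_can_restore_after_move_outside:
  assumes sg: "simple_graph V E" and iso: "isolate_free V E" and cl: "closed_under_edges E C"
    and inv: "strategy_invariant E C P B" and lg: "legal_move V E P B v c" and vC: "v \<notin> C"
    and mv: "do_move P B v c = (P', B')"
  shows "dom_can_restore V E C P' B'"
proof -
  have nse': "\<not> sepy_end V E P' B'"
    using not_sepy_end_after_move_outside[OF sg iso cl inv lg vC] by (simp add: mv)
  have dj': "P' \<inter> B' = {}"
    using do_move_disjoint[OF lg] inv by (simp add: mv strategy_invariant_def)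
  have mono': "P \<subseteq> P'" "B \<subseteq> B'" "P' \<union> B' = insert v (P \<union> B)"
    using do_move_mono[of P B v c] do_move_Un[of P B v c] by (simp_all add: mv)
  have vc: "v \<in> colset c P' B'" using colset_do_move[of c P B v c] by (simp add: mv)
  show ?thesis
  proof (cases "cnbhd E v \<inter> colset (opp_color c) P' B' = {}")
    case False
    then obtain u where "u \<in> cnbhd E v" "u \<in> colset (opp_color c) P' B'" by blast
    then have "sees_both_colors E P' B' v" by (rule sees_both_colorsI[OF self_in_cnbhd vc])
    have "strategy_invariant E C P' B'"
    proof (rule strategy_invariant_extend_outside[OF inv mono'(1,2) dj'])
      fix w assume "w \<in> (P' \<union> B') - (P \<union> B)"
      with mono'(3) have "w = v" by blast
      with vC \<open>sees_both_colors E P' B' v\<close> show "w \<notin> C \<and> sees_both_colors E P' B' w" by blast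
    qed
    with nse' show ?thesis by (simp add: dom_can_restore_def)
  next
    case True
    have "v \<in> V" using lg by (simp add: legal_move_def)
    moreover have "v \<in> P' \<union> B'" using mono' by blast
    ultimately obtain z where "E v z" "z \<notin> C" "legal_move V E P' B' z (opp_color c)"
      using legal_answer_outside[OF sg cl nse' _ _ vC True] by blast
    then have z: "z \<in> cnbhd E v" and vz: "v \<in> cnbhd E z" and zC: "z \<notin> C"
      and lgz: "legal_move V E P' B' z (opp_color c)"
      using sg by (auto simp: mem_cnbhd simple_graph_def)
    obtain P'' B'' where mv': "do_move P' B' z (opp_color c) = (P'', B'')" by fastforce
    have vc'': "v \<in> colset c P'' B''" and zc'': "z \<in> colset (opp_color c) P'' B''"
      using vc colset_do_move[of _ P' B' z "opp_color c"] by (simp_all add: mv')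
    have sees_v: "sees_both_colors E P'' B'' v"
      using self_in_cnbhd vc'' z zc'' by (rule sees_both_colorsI)
    have sees_z: "sees_both_colors E P'' B'' z"
      using vz vc'' self_in_cnbhd zc'' by (rule sees_both_colorsI)
    have mono'': "P' \<subseteq> P''" "B' \<subseteq> B''" "P'' \<union> B'' = insert z (P' \<union> B')"
      using do_move_mono[of P' B' z "opp_color c"] do_move_Un[of P' B' z "opp_color c"]
      by (simp_all add: mv')
    have "strategy_invariant E C P'' B''"
    proof (rule strategy_invariant_extend_outside[OF inv])
      show "P \<subseteq> P''" "B \<subseteq> B''" using mono' mono'' by blast+
      show "P'' \<inter> B'' = {}" using do_move_disjoint[OF lgz dj'] by (simp add: mv')
      fix w assume "w \<in> (P'' \<union> B'') - (P \<union> B)"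
      with mono'(3) mono''(3) have "w = v \<or> w = z" by blast
      with vC zC sees_v sees_z show "w \<notin> C \<and> sees_both_colors E P'' B'' w" by blast
    qed
    with nse' lgz mv' show ?thesis unfolding dom_can_restore_def by (metis fst_conv snd_conv)
  qed
qed

lemma dom_wins_if_dom_can_restore:
  assumes restore: "dom_can_restore V E C P B"
    and IH: "\<And>X Y. P \<subseteq> X \<Longrightarrow> B \<subseteq> Y \<Longrightarrow> strategy_invariant E C X Y
      \<Longrightarrow> dom_wins V E True False False X Y"
  shows "dom_wins V E True True False P B"
proof -
  have nse: "\<not> sepy_end V E P B" using restore by (simp add: dom_can_restore_def)
  consider "dom_end V E P B"
    | "\<not> dom_end V E P B" "strategy_invariant E C P B"
    | w d where "\<not> dom_end V E P B" "legal_move V E P B w d"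
        "strategy_invariant E C (fst (do_move P B w d)) (snd (do_move P B w d))"
    using restore unfolding dom_can_restore_def by blast
  then show ?thesis
  proof cases
    case 1
    with nse show ?thesis by (rule dom_wins.ended)
  next
    case 2
    then show ?thesis using nse IH[of P B] by (intro dom_wins.dom_passes) auto
  next
    case (3 w d)
    have "dom_wins V E True False False (fst (do_move P B w d)) (snd (do_move P B w d))"
      using 3(3) do_move_mono[of P B w d] by (intro IH) simp_all
    with nse 3(1,2) show ?thesis by (rule dom_wins.dom_move)
  qed
qed

lemma dom_wins_if_strategy_invariant:
  assumes sg: "simple_graph V E" and iso: "isolate_free V E"
    and CV: "C \<subseteq> V" and cl: "closed_under_edges E C"
  shows "strategy_invariant E C P B \<Longrightarrow> dom_wins V E True False f P B"
proof (induction "card (V - (P \<union> B))" arbitrary: P B f rule: less_induct)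
  case less
  from less.prems have dj: "P \<inter> B = {}" and bal: "outside_balanced E C P B"
    and winC: "dom_wins C (restrict_edges E C) False False False (P \<inter> C) (B \<inter> C)"
    unfolding strategy_invariant_def by blast+
  have nse: "\<not> sepy_end V E P B"
    using not_sepy_end_if_outside_balanced[OF cl dj bal dom_wins_not_sepy_end[OF winC]] .
  show ?case
  proof (cases "dom_end V E P B")
    case True
    with nse show ?thesis by (rule dom_wins.ended)
  next
    case nde: False
    show ?thesis
    proof (rule dom_wins.sepy_move[OF nse nde], intro allI impI)
      fix v c assume lg: "legal_move V E P B v c"
      obtain P' B' where mv: "do_move P B v c = (P', B')" by fastforce
      have "P \<subseteq> P'" "B \<subseteq> B'" "v \<in> P' \<union> B'"
        using do_move_mono[of P B v c] do_move_Un[of P B v c] by (simp_all add: mv)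
      moreover have "v \<in> V" "v \<notin> P \<union> B" using lg by (simp_all add: legal_move_def)
      moreover have "finite V" using sg by (simp add: simple_graph_def)
      ultimately have fewer: "card (V - (X \<union> Y)) < card (V - (P \<union> B))"
        if "P' \<subseteq> X" "B' \<subseteq> Y" for X Y
        using that by (intro psubset_card_mono) auto
      have IH: "dom_wins V E True False False X Y"
        if "P' \<subseteq> X" "B' \<subseteq> Y" "strategy_invariant E C X Y" for X Y
        using less.hyps[OF fewer[OF that(1,2)] that(3)] .
      have restore: "dom_can_restore V E C P' B'"
      proof (cases "v \<in> C")
        case True
        then show ?thesis by (rule dom_can_restore_after_move_inside[OF cl CV less.prems lg _ mv])
      next
        case False
        then show ?thesis by (rule dom_can_restore_after_move_outside[OF sg iso cl less.prems lg _ mv])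
      qed
      from restore IH have "dom_wins V E True True False P' B'"
        by (rule dom_wins_if_dom_can_restore)
      then show "dom_wins V E True True False (fst (do_move P B v c)) (snd (do_move P B v c))"
        by (simp add: mv)
    qed
  qed
qed

lemma sepy_start_win_with_passing:
  assumes sg: "simple_graph V E" and iso: "isolate_free V E"
  shows "sepy_start_win V E True"
proof -
  have "dom_wins {} (restrict_edges E {}) False False False {} {}"
    by (rule dom_wins.ended) (simp_all add: sepy_end_def dom_end_def)
  then have "strategy_invariant E {} {} {}"
    by (simp add: strategy_invariant_def outside_balanced_def)
  moreover have "closed_under_edges E {}" by (simp add: closed_under_edges_def)
  ultimately have "dom_wins V E True False True {} {}"
    using dom_wins_if_strategy_invariant[OF sg iso empty_subsetI] by blast
  then show ?thesis by (simp add: sepy_start_win_def)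
qed

lemma dom_start_win_with_passing:
  assumes sg: "simple_graph V E" and iso: "isolate_free V E" and "dom_win_component V E C"
  shows "dom_start_win V E True"
proof -
  from assms(3) have CV: "C \<subseteq> V" and "C \<noteq> {}" and cl: "closed_under_edges E C"
    and winC: "dom_wins C (restrict_edges E C) False True True {} {}"
    by (auto simp: dom_win_component_def component_def closed_under_edges_def dom_start_win_def)
  have "\<not> dom_end C (restrict_edges E C) {} {}" using \<open>C \<noteq> {}\<close> by (simp add: dom_end_def)
  with winC obtain w d where lgC: "legal_move C (restrict_edges E C) {} {} w d"
    and winC': "dom_wins C (restrict_edges E C) False False False
      (fst (do_move {} {} w d)) (snd (do_move {} {} w d))"
    by (cases rule: dom_wins_without_passE) blast+
  have wC: "w \<in> C" using lgC by (simp add: legal_move_def)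
  have lg: "legal_move V E {} {} w d"
    using legal_move_restrict_edges[OF cl CV wC, of "{}" "{}" d] lgC by simp
  have "outside_balanced E C {} {}" by (simp add: outside_balanced_def)
  moreover have "fst (do_move {} {} w d) \<inter> C = fst (do_move {} {} w d)"
    "snd (do_move {} {} w d) \<inter> C = snd (do_move {} {} w d)"
    using wC by (cases d; simp add: do_move_def)+
  ultimately have "strategy_invariant E C (fst (do_move {} {} w d)) (snd (do_move {} {} w d))"
    using do_move_disjoint[OF lg] outside_balanced_move_inside[OF _ wC] winC'
    by (simp add: strategy_invariant_def)
  then have "dom_wins V E True False False (fst (do_move {} {} w d)) (snd (do_move {} {} w d))"
    by (rule dom_wins_if_strategy_invariant[OF sg iso CV cl])
  moreover have "\<not> sepy_end V E {} {}" by (auto simp: sepy_end_def cnbhd_def)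
  moreover have "\<not> dom_end V E {} {}" using \<open>C \<noteq> {}\<close> CV by (auto simp: dom_end_def)
  ultimately show ?thesis unfolding dom_start_win_def by (blast intro: dom_wins.dom_move lg)
qed

theorem mainTheorem7:
  fixes V :: "'a set" and E :: "'a \<Rightarrow> 'a \<Rightarrow> bool"
  assumes "simple_graph V E" and "isolate_free V E"
  shows "sepy_start_win V E True \<and>
         ((\<exists>C. dom_win_component V E C) \<longrightarrow> dom_start_win V E True)"
  using sepy_start_win_with_passing[OF assms] dom_start_win_with_passing[OF assms] by blast

end
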